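(* Consider the Decaying-$\epsilon$-FOCuS procedure (described in the context) on $M>1$ streams, where stream 1 has a change-point at $\nu=0$ (every observation of stream 1 is $\mathcal{N}(\mu_1,1)$ with $\mu_1\ne0$, all other observations $\mathcal{N}(0,1)$). Then for every $t\ge1$, $$\mathbb{P}_{M,0}\left(T_t^{(1)}<\frac{\mu_1^2t^{2/3}}{8},\ N_t^{(1)}>\frac{t^{2/3}}{2}\right)\le\exp\left(-\frac{t^{2/3}}{4}\left(\mu_1-\frac{\mu_1}{\sqrt2}\right)^2\right),$$ and for $t=0$ this probability is $0$.
   Context: Setting: there are $M$ independent data streams. At each time $t=1,2,\dots$ an agent selects one stream $A_t\in\{1,\dots,M\}$ and observes one value $X_t\in\mathbb{R}$ from it. The $i$-th observation taken from stream $m$ is denoted $X_i^{(m)}$. Pre-change observations are $\mathcal{N}(0,1)$. Stream 1 has a change-point $\nu$: if $A_t=1$ and $t>\nu$ then $X_t\sim\mathcal{N}(\mu_1,1)$ with $\mu_1\neq0$; otherwise $X_t\sim\mathcal{N}(0,1)$; observations are conditionally independent given the selections. $\mathbb{P}_{M,\nu}$ denotes probability for $M$ streams with change at $\nu$ in stream 1. $\mathcal{F}_t=\sigma(A_1,X_1,\dots,A_t,X_t)$. The sampling process and statistics are defined for all $t\ge 0$. Decaying-$\epsilon$-FOCuS: let $N_t^{(m)}$ be the number of times stream $m$ was selected up to and including time $t$. The local GLR statistic is $T_t^{(m)}=\max_{0\le k<N_t^{(m)}}\frac{(\sum_{i=k+1}^{N_t^{(m)}}X_i^{(m)})^2}{2(N_t^{(m)}-k)}$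 (and $T_t^{(m)}=0$ if $N_t^{(m)}=0$); $M_t=\arg\max_m T_t^{(m)}$. The local change-point estimate $\hat\nu_t^{(m)}$ is the time at which stream $m$'s $\hat k$-th observation was taken, where $\hat k$ is the maximizing index $k$ in $T_t^{(m)}$ (time $0$ if $\hat k=0$ or $N_t^{(m)}=0$); the global estimate is $\hat\nu_t=\hat\nu_t^{(M_t)}$; ties are broken uniformly at random. Initially $\hat\nu_0=0$, $M_0$ uniform on $[M]$. At time $t$, set $\epsilon_t=\min\{1, M/\max(1,t-\hat\nu_{t-1})^{1/3}\}$, draw $G_t\sim\mathrm{Bernoulli}(\epsilon_t)$ (conditionally on $\mathcal{F}_{t-1}$); if $G_t=1$ choose $A_t$ uniformly from $[M]$, otherwise $A_t=M_{t-1}$; then observe $X_t$ and update the statistics. *)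

theory Defs
  imports "HOL-Probability.Probability"
begin

(* Randomness: omega = (U, X).
   U (t, j), j = 0..3: iid Uniform(0,1) variables used at time t
     j = 0 : Bernoulli(eps_t) draw  G_t = [U(t,0) < eps_t]
     j = 1 : uniform exploration arm on {1..M}
     j = 2 : uniform tie-breaking for M_t = argmax_m T_t^(m)
     j = 3 : uniform tie-breaking for the maximizing index k-hat of stream M_t
   X (m, i) : the i-th observation (i >= 1) taken from stream m (reward-table model);
     with nu = 0, X(1,i) ~ N(mu,1) and X(m,i) ~ N(0,1) for m <> 1, all independent. *)

definition focus_space :: "real \<Rightarrow> ((nat \<times> nat \<Rightarrow> real) \<times> (nat \<times> nat \<Rightarrow> real)) measure" where
  "focus_space mu =
     (PiM UNIV (\<lambda>_. uniform_measure lborel {0<..<1::real}))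
     \<Otimes>\<^sub>M (PiM UNIV (\<lambda>p. density lborel (normal_density (if fst p = 1 then mu else 0) 1)))"

definition pick :: "real \<Rightarrow> nat set \<Rightarrow> nat" where
  "pick u S = sorted_list_of_set S ! nat \<lfloor>u * real (card S)\<rfloor>"

definition Ncount :: "nat list \<Rightarrow> nat \<Rightarrow> nat" where
  "Ncount h m = length (filter (\<lambda>a. a = m) h)"

definition seg :: "(nat \<times> nat \<Rightarrow> real) \<Rightarrow> nat \<Rightarrow> nat \<Rightarrow> nat \<Rightarrow> real" where
  "seg X m n k = (\<Sum>i\<in>{k+1..n}. X (m, i))^2 / (2 * real (n - k))"

definition Tstat :: "(nat \<times> nat \<Rightarrow> real) \<Rightarrow> nat list \<Rightarrow> nat \<Rightarrow> real" where
  "Tstat X h m = (let n = Ncount h m in if n = 0 then 0 else Max (seg X m n ` {..<n}))"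

definition khat :: "(nat \<times> nat \<Rightarrow> real) \<Rightarrow> (nat \<times> nat \<Rightarrow> real) \<Rightarrow> nat list \<Rightarrow> nat \<Rightarrow> nat" where
  "khat U X h m = (let n = Ncount h m in
     if n = 0 then 0 else pick (U (length h, 3)) {k. k < n \<and> seg X m n k = Tstat X h m})"

(* time at which the k-th observation of stream m was taken (0 if k = 0) *)
definition obs_time :: "nat list \<Rightarrow> nat \<Rightarrow> nat \<Rightarrow> nat" where
  "obs_time h m k = (if k = 0 then 0
     else filter (\<lambda>s. h ! (s - 1) = m) [1..<Suc (length h)] ! (k - 1))"

definition Mhat :: "(nat \<times> nat \<Rightarrow> real) \<Rightarrow> (nat \<times> nat \<Rightarrow> real) \<Rightarrow> nat \<Rightarrow> nat list \<Rightarrow> nat" where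
  "Mhat U X M h = pick (U (length h, 2))
     {m \<in> {1..M}. \<forall>m'\<in>{1..M}. Tstat X h m' \<le> Tstat X h m}"

definition nuhat :: "(nat \<times> nat \<Rightarrow> real) \<Rightarrow> (nat \<times> nat \<Rightarrow> real) \<Rightarrow> nat \<Rightarrow> nat list \<Rightarrow> nat" where
  "nuhat U X M h = (if h = [] then 0
     else obs_time h (Mhat U X M h) (khat U X h (Mhat U X M h)))"

definition eps :: "nat \<Rightarrow> nat \<Rightarrow> nat \<Rightarrow> real" where
  "eps M t nu = min 1 (real M / (max 1 (real t - real nu)) powr (1/3))"

(* A_{t} given history h of length t-1 *)
definition next_arm :: "(nat \<times> nat \<Rightarrow> real) \<Rightarrow> (nat \<times> nat \<Rightarrow> real) \<Rightarrow> nat \<Rightarrow> nat list \<Rightarrow> nat" where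
  "next_arm U X M h = (let t = Suc (length h) in
     if U (t, 0) < eps M t (nuhat U X M h) then pick (U (t, 1)) {1..M} else Mhat U X M h)"

primrec arms :: "(nat \<times> nat \<Rightarrow> real) \<Rightarrow> (nat \<times> nat \<Rightarrow> real) \<Rightarrow> nat \<Rightarrow> nat \<Rightarrow> nat list" where
  "arms U X M 0 = []"
| "arms U X M (Suc t) = arms U X M t @ [next_arm U X M (arms U X M t)]"

end

theory Submission
  imports Defs
begin

(* On the event, the first N > t^(2/3)/2 observations of stream 1 have a sum S with
   S^2/(2N) <= T_t^(1) < mu^2 t^(2/3)/8 < mu^2 N/4, i.e. |S| < |mu| N / sqrt 2.
   In the reward-table model these observations are i.i.d. N(mu,1) whatever arms the procedure
   chooses, so with c = mu - mu/sqrt 2 the likelihood ratio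
   L_n = prod_{i<=n} exp (-c (X_i - mu) - c^2/2) of N(mu - c, 1) against N(mu, 1) is a product of
   independent mean-one factors, and on the event L_N >= exp (t^(2/3) c^2 / 4).  Ville's maximal
   inequality bounds the probability that L_n reaches this level for some n <= t by
   exp (- t^(2/3) c^2 / 4). *)

lemma sets_focus_space:
  "sets (focus_space mu) = sets (PiM UNIV (\<lambda>_. lborel) \<Otimes>\<^sub>M PiM UNIV (\<lambda>_::nat \<times> nat. lborel :: real measure))"
  unfolding focus_space_def by (intro sets_pair_measure_cong sets_PiM_cong) auto

lemma measurable_focus_space:
  "measurable (focus_space mu) N = measurable (PiM UNIV (\<lambda>_. lborel) \<Otimes>\<^sub>M PiM UNIV (\<lambda>_::nat \<times> nat. lborel :: real measure)) N"
  by (rule measurable_cong_sets[OF sets_focus_space refl])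

lemma prob_space_focus_space: "prob_space (focus_space mu)"
  unfolding focus_space_def
  by (intro prob_space_pair prob_space_PiM prob_space_uniform_measure prob_space_normal_density; simp)

lemma measurable_uniform_coordinate[measurable]: "(\<lambda>\<omega>. fst \<omega> p) \<in> borel_measurable (focus_space mu)"
  unfolding measurable_focus_space by measurable

lemma measurable_observation[measurable]: "(\<lambda>\<omega>. snd \<omega> p) \<in> borel_measurable (focus_space mu)"
  unfolding measurable_focus_space by measurable

lemma measurable_seg[measurable]: "(\<lambda>\<omega>. seg (snd \<omega>) m n k) \<in> borel_measurable (focus_space mu)"
  unfolding seg_def by measurable

lemma measurable_Tstat[measurable]: "(\<lambda>\<omega>. Tstat (snd \<omega>) h m) \<in> borel_measurable (focus_space mu)"
  unfolding Tstat_def Let_def by measurable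

lemma measurable_pick_const_set: "(\<lambda>u. pick u B) \<in> measurable borel (count_space UNIV)"
proof -
  have "(\<lambda>u. \<lfloor>u * real (card B)\<rfloor>) \<in> measurable borel (count_space UNIV)"
    by (rule measurable_compose[OF _ measurable_real_floor]) simp
  then have "(\<lambda>u. sorted_list_of_set B ! nat \<lfloor>u * real (card B)\<rfloor>) \<in> measurable borel (count_space UNIV)"
    by (rule measurable_compose[where g="\<lambda>z. sorted_list_of_set B ! nat z"]) simp
  then show ?thesis
    unfolding pick_def .
qed

lemma measurable_pick_Collect:
  assumes g: "g \<in> borel_measurable N" and "finite A" and P: "\<And>a. Measurable.pred N (P a)"
  shows "(\<lambda>\<omega>. pick (g \<omega>) {a \<in> A. P a \<omega>}) \<in> measurable N (count_space UNIV)"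
proof -
  have "finite (Pow A)" "countable (Pow A)"
    using \<open>finite A\<close> by (simp_all add: countable_finite)
  have "(\<lambda>\<omega>. {a \<in> A. P a \<omega>}) \<in> measurable N (count_space (Pow A))"
    unfolding measurable_count_space_eq2[OF \<open>finite (Pow A)\<close>]
  proof safe
    fix B assume "B \<subseteq> A"
    then have "(\<lambda>\<omega>. {a \<in> A. P a \<omega>}) -` {B} \<inter> space N = {\<omega> \<in> space N. \<forall>a\<in>A. a \<in> B \<longleftrightarrow> P a \<omega>}"
      by blast
    also have "\<dots> \<in> sets N"
      using P \<open>finite A\<close> by measurable
    finally show "(\<lambda>\<omega>. {a \<in> A. P a \<omega>}) -` {B} \<inter> space N \<in> sets N" .
  qed
  then show ?thesis
    using \<open>countable (Pow A)\<close>
    by (rule measurable_compose_countable'[OF measurable_compose[OF g measurable_pick_const_set]])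
qed

lemma measurable_Mhat[measurable]:
  "(\<lambda>\<omega>. Mhat (fst \<omega>) (snd \<omega>) M h) \<in> measurable (focus_space mu) (count_space UNIV)"
proof -
  have "Measurable.pred (focus_space mu) (\<lambda>\<omega>. \<forall>m'\<in>{1..M}. Tstat (snd \<omega>) h m' \<le> Tstat (snd \<omega>) h m)" for m
    by measurable
  then show ?thesis
    unfolding Mhat_def by (rule measurable_pick_Collect[OF measurable_uniform_coordinate finite_atLeastAtMost])
qed

lemma measurable_khat[measurable]:
  "(\<lambda>\<omega>. khat (fst \<omega>) (snd \<omega>) h m) \<in> measurable (focus_space mu) (count_space UNIV)"
proof (cases "Ncount h m = 0")
  case False
  have "(\<lambda>\<omega>. pick (fst \<omega> (length h, 3)) {k \<in> {..<Ncount h m}. seg (snd \<omega>) m (Ncount h m) k = Tstat (snd \<omega>) h m})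
      \<in> measurable (focus_space mu) (count_space UNIV)"
    by (rule measurable_pick_Collect[OF measurable_uniform_coordinate finite_lessThan]) measurable
  then show ?thesis
    using False unfolding khat_def Let_def by simp
qed (simp add: khat_def)

lemma measurable_nuhat[measurable]:
  "(\<lambda>\<omega>. nuhat (fst \<omega>) (snd \<omega>) M h) \<in> measurable (focus_space mu) (count_space UNIV)"
proof -
  have "(\<lambda>\<omega>. (\<lambda>m \<omega>. if h = [] then 0 else obs_time h m (khat (fst \<omega>) (snd \<omega>) h m)) (Mhat (fst \<omega>) (snd \<omega>) M h) \<omega>)
      \<in> measurable (focus_space mu) (count_space UNIV)"
    by (rule measurable_compose_countable[OF _ measurable_Mhat]) simp
  then show ?thesis
    unfolding nuhat_def by simp
qed

lemma measurable_next_arm[measurable]: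
  "(\<lambda>\<omega>. next_arm (fst \<omega>) (snd \<omega>) M h) \<in> measurable (focus_space mu) (count_space UNIV)"
proof -
  let ?t = "Suc (length h)"
  note measurable_compose[OF measurable_uniform_coordinate measurable_pick_const_set, measurable]
  have "(\<lambda>\<omega>. (\<lambda>v \<omega>. if fst \<omega> (?t, 0) < eps M ?t v then pick (fst \<omega> (?t, 1)) {1..M} else Mhat (fst \<omega>) (snd \<omega>) M h)
      (nuhat (fst \<omega>) (snd \<omega>) M h) \<omega>) \<in> measurable (focus_space mu) (count_space UNIV)"
    by (rule measurable_compose_countable[OF _ measurable_nuhat]) measurable
  then show ?thesis
    unfolding next_arm_def Let_def by simp
qed

lemma measurable_arms[measurable]:
  "(\<lambda>\<omega>. arms (fst \<omega>) (snd \<omega>) M t) \<in> measurable (focus_space mu) (count_space UNIV)"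
proof (induction t)
  case (Suc t)
  have "(\<lambda>\<omega>. (\<lambda>h \<omega>. h @ [next_arm (fst \<omega>) (snd \<omega>) M h]) (arms (fst \<omega>) (snd \<omega>) M t) \<omega>)
      \<in> measurable (focus_space mu) (count_space UNIV)"
    by (rule measurable_compose_countable[OF _ Suc.IH]) measurable
  then show ?case
    by simp
qed simp

lemma measurable_Tstat_arms[measurable]:
  "(\<lambda>\<omega>. Tstat (snd \<omega>) (arms (fst \<omega>) (snd \<omega>) M t) m) \<in> borel_measurable (focus_space mu)"
  by (rule measurable_compose_countable[where f="\<lambda>h \<omega>. Tstat (snd \<omega>) h m", OF _ measurable_arms]) measurable

definition prod_crosses :: "(nat \<Rightarrow> 'a \<Rightarrow> real) \<Rightarrow> real \<Rightarrow> real \<Rightarrow> nat \<Rightarrow> nat \<Rightarrow> (nat \<Rightarrow> 'a) set" where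
  "prod_crosses f a K k d = {x. \<exists>n\<in>{k..k+d}. K \<le> a * (\<Prod>i\<in>{k..<n}. f i (x i))}"

lemma prod_crosses_fun_upd:
  assumes "a < K"
  shows "x(k := y) \<in> prod_crosses f a K k (Suc d) \<longleftrightarrow> x \<in> prod_crosses f (a * f k y) K (Suc k) d"
proof -
  have split: "{k..k + Suc d} = insert k {Suc k..Suc k + d}" by auto
  have "(\<Prod>i\<in>{k..<n}. f i ((x(k := y)) i)) = f k y * (\<Prod>i\<in>{Suc k..<n}. f i (x i))"
    if "n \<in> {Suc k..Suc k + d}" for n
    using that by (subst prod.atLeast_Suc_lessThan) (auto intro!: prod.cong)
  then show ?thesis
    using assms unfolding prod_crosses_def split by (auto simp: mult.assoc)
qed

lemma prod_crosses_sets: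
  assumes "\<And>i. f i \<in> borel_measurable (M i)"
  shows "prod_crosses f a K k d \<inter> space (PiM {k..<k+d} M) \<in> sets (PiM {k..<k+d} M)"
proof -
  have "(\<lambda>x. f i (x i)) \<in> borel_measurable (PiM {k..<k+d} M)" if "i \<in> {k..<k+d}" for i
    by (rule measurable_compose[OF measurable_component_singleton[OF that] assms])
  then have "(\<lambda>x. a * (\<Prod>i\<in>{k..<n}. f i (x i))) \<in> borel_measurable (PiM {k..<k+d} M)" if "n \<in> {k..k+d}" for n
    using that by (intro borel_measurable_times borel_measurable_const borel_measurable_prod) auto
  then have "Measurable.pred (PiM {k..<k+d} M) (\<lambda>x. \<exists>n\<in>{k..k+d}. K \<le> a * (\<Prod>i\<in>{k..<n}. f i (x i)))"
    by (intro pred_intros_finite(4)) (auto simp: pred_def intro!: borel_measurable_le)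
  then show ?thesis
    unfolding prod_crosses_def pred_def by (simp add: Int_commute Collect_conj_eq)
qed

lemma emeasure_prod_crosses_Suc:
  assumes sigma: "\<And>i. sigma_finite_measure (M i)"
    and f_meas: "\<And>i. f i \<in> borel_measurable (M i)"
    and "a < K"
  shows "emeasure (PiM {k..<k + Suc d} M) (prod_crosses f a K k (Suc d) \<inter> space (PiM {k..<k + Suc d} M))
    = (\<integral>\<^sup>+ y. emeasure (PiM {Suc k..<Suc k + d} M)
        (prod_crosses f (a * f k y) K (Suc k) d \<inter> space (PiM {Suc k..<Suc k + d} M)) \<partial>M k)"
proof -
  define I where "I = {Suc k..<Suc k + d}"
  have insert_I: "{k..<k + Suc d} = insert k I" and "k \<notin> I" "finite I"
    unfolding I_def by auto
  interpret product_sigma_finite M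
    using sigma by (rule product_sigma_finite.intro)
  have "emeasure (PiM {k..<k + Suc d} M) (prod_crosses f a K k (Suc d) \<inter> space (PiM {k..<k + Suc d} M))
      = (\<integral>\<^sup>+ x. indicator (prod_crosses f a K k (Suc d) \<inter> space (PiM {k..<k + Suc d} M)) x \<partial>PiM {k..<k + Suc d} M)"
    by (rule nn_integral_indicator[symmetric]) (rule prod_crosses_sets[of f M, OF f_meas])
  also have "\<dots> = (\<integral>\<^sup>+ x. indicator (prod_crosses f a K k (Suc d)) x \<partial>PiM (insert k I) M)"
    unfolding insert_I by (intro nn_integral_cong) (simp add: indicator_def)
  also have "\<dots> = (\<integral>\<^sup>+ y. (\<integral>\<^sup>+ x. indicator (prod_crosses f a K k (Suc d)) (x(k := y)) \<partial>PiM I M) \<partial>M k)"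
    using prod_crosses_sets[of f M a K k "Suc d", OF f_meas] unfolding insert_I
    by (intro product_nn_integral_insert_rev[OF \<open>finite I\<close> \<open>k \<notin> I\<close>]) (simp add: borel_measurable_indicator_iff)
  also have "\<dots> = (\<integral>\<^sup>+ y. (\<integral>\<^sup>+ x. indicator (prod_crosses f (a * f k y) K (Suc k) d \<inter> space (PiM I M)) x \<partial>PiM I M) \<partial>M k)"
    using \<open>a < K\<close> by (intro nn_integral_cong) (simp add: indicator_def prod_crosses_fun_upd)
  also have "\<dots> = (\<integral>\<^sup>+ y. emeasure (PiM I M) (prod_crosses f (a * f k y) K (Suc k) d \<inter> space (PiM I M)) \<partial>M k)"
    unfolding I_def by (intro nn_integral_cong nn_integral_indicator prod_crosses_sets f_meas)
  finally show ?thesis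
    unfolding I_def .
qed

lemma ville_inequality_PiM:
  assumes prob: "\<And>i. prob_space (M i)"
    and f_meas: "\<And>i. f i \<in> borel_measurable (M i)"
    and f_nonneg: "\<And>i y. 0 \<le> f i y"
    and f_mean: "\<And>i. (\<integral>\<^sup>+ y. f i y \<partial>M i) \<le> 1"
    and "0 < K" "0 \<le> a"
  shows "emeasure (PiM {k..<k+d} M) (prod_crosses f a K k d \<inter> space (PiM {k..<k+d} M)) \<le> ennreal (a / K)"
proof -
  have started_above: "emeasure (PiM {k..<k+d} M) (prod_crosses f a K k d \<inter> space (PiM {k..<k+d} M)) \<le> ennreal (a / K)"
    if "K \<le> a" for a k d
  proof -
    interpret prob_space "PiM {k..<k+d} M" by (rule prob_space_PiM[OF prob])
    have "emeasure (PiM {k..<k+d} M) (prod_crosses f a K k d \<inter> space (PiM {k..<k+d} M)) \<le> 1"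
      by (rule emeasure_le_1)
    also have "1 \<le> ennreal (a / K)" using that \<open>0 < K\<close> by simp
    finally show ?thesis .
  qed
  show ?thesis
    using \<open>0 \<le> a\<close>
  proof (induction d arbitrary: k a)
    case 0
    show ?case
    proof (cases "K \<le> a")
      case False
      then show ?thesis by (simp add: prod_crosses_def)
    qed (rule started_above)
  next
    case (Suc d)
    show ?case
    proof (cases "K \<le> a")
      case True
      then show ?thesis by (rule started_above)
    next
      case False
      let ?P = "PiM {Suc k..<Suc k + d} M"
      have "emeasure (PiM {k..<k + Suc d} M) (prod_crosses f a K k (Suc d) \<inter> space (PiM {k..<k + Suc d} M))
          = (\<integral>\<^sup>+ y. emeasure ?P (prod_crosses f (a * f k y) K (Suc k) d \<inter> space ?P) \<partial>M k)"
        using False prob by (intro emeasure_prod_crosses_Suc f_meas prob_space_imp_sigma_finite) simp_all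
      also have "\<dots> \<le> (\<integral>\<^sup>+ y. ennreal (a / K) * ennreal (f k y) \<partial>M k)"
      proof (rule nn_integral_mono)
        fix y
        have "emeasure ?P (prod_crosses f (a * f k y) K (Suc k) d \<inter> space ?P) \<le> ennreal (a * f k y / K)"
          using Suc.prems f_nonneg by (intro Suc.IH) simp
        also have "\<dots> = ennreal (a / K) * ennreal (f k y)"
          using Suc.prems f_nonneg \<open>0 < K\<close> by (simp add: ennreal_mult'[symmetric])
        finally show "emeasure ?P (prod_crosses f (a * f k y) K (Suc k) d \<inter> space ?P) \<le> ennreal (a / K) * ennreal (f k y)" .
      qed
      also have "\<dots> = ennreal (a / K) * (\<integral>\<^sup>+ y. f k y \<partial>M k)"
        using f_meas by (intro nn_integral_cmult) simp
      also have "\<dots> \<le> ennreal (a / K)"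
        using mult_left_mono[OF f_mean[of k], of "ennreal (a / K)"] by simp
      finally show ?thesis .
    qed
  qed
qed

lemma normal_density_exp_tilt:
  "normal_density mu \<sigma> y * exp ((- c * (y - mu) - c\<^sup>2 / 2) / \<sigma>\<^sup>2) = normal_density (mu - c) \<sigma> y"
proof -
  have "- (y - mu)\<^sup>2 / (2 * \<sigma>\<^sup>2) + (- c * (y - mu) - c\<^sup>2 / 2) / \<sigma>\<^sup>2 = - (y - (mu - c))\<^sup>2 / (2 * \<sigma>\<^sup>2)"
    by (cases "\<sigma> = 0") (simp_all add: power2_eq_square field_simps)
  then show ?thesis
    unfolding normal_density_def by (simp add: exp_add[symmetric] mult.assoc)
qed

lemma nn_integral_normal_likelihood_ratio:
  assumes "0 < \<sigma>"
  shows "(\<integral>\<^sup>+ y. exp ((- c * (y - mu) - c\<^sup>2 / 2) / \<sigma>\<^sup>2) \<partial>density lborel (normal_density mu \<sigma>)) = 1"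
proof -
  have "(\<integral>\<^sup>+ y. exp ((- c * (y - mu) - c\<^sup>2 / 2) / \<sigma>\<^sup>2) \<partial>density lborel (normal_density mu \<sigma>))
      = (\<integral>\<^sup>+ y. ennreal (normal_density mu \<sigma> y) * ennreal (exp ((- c * (y - mu) - c\<^sup>2 / 2) / \<sigma>\<^sup>2)) \<partial>lborel)"
    by (simp add: nn_integral_density)
  also have "\<dots> = (\<integral>\<^sup>+ y. normal_density (mu - c) \<sigma> y \<partial>lborel)"
    using normal_density_exp_tilt by (intro nn_integral_cong) (metis ennreal_mult' normal_density_nonneg)
  also have "\<dots> = 1"
    using prob_space.emeasure_space_1[OF prob_space_normal_density[OF assms, of "mu - c"]]
    by (simp add: emeasure_density)
  finally show ?thesis .
qed

lemma mean_drift_bound: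
  fixes mu S N :: real
  defines "c \<equiv> mu - mu / sqrt 2"
  assumes "2 * S\<^sup>2 < mu\<^sup>2 * N\<^sup>2" "0 \<le> N"
  shows "N * c\<^sup>2 / 2 \<le> c * (N * mu - S) - N * c\<^sup>2 / 2"
proof -
  define s where "s = sqrt (2::real)"
  have s: "s\<^sup>2 = 2" "1 < s" "0 < s"
    unfolding s_def by auto
  have "(\<bar>mu * S\<bar> * s)\<^sup>2 = mu\<^sup>2 * (2 * S\<^sup>2)"
    using s(1) by (simp add: power_mult_distrib)
  also have "\<dots> \<le> mu\<^sup>2 * (mu\<^sup>2 * N\<^sup>2)"
    using assms(2) by (intro mult_left_mono) simp_all
  also have "\<dots> = (mu\<^sup>2 * N)\<^sup>2"
    by (simp add: power_mult_distrib)
  finally have "\<bar>mu * S\<bar> * s \<le> mu\<^sup>2 * N"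
    by (rule power2_le_imp_le) (simp add: \<open>0 \<le> N\<close>)
  moreover have "mu * S * s \<le> \<bar>mu * S\<bar> * s"
    using s(3) by (intro mult_right_mono) simp_all
  ultimately have "mu * S * s \<le> mu\<^sup>2 * N"
    by linarith
  then have "mu * S \<le> mu\<^sup>2 * N / s"
    using s(3) by (simp add: pos_le_divide_eq)
  then have "0 \<le> (1 - 1 / s) * (mu\<^sup>2 * N / s - mu * S)"
    using s(2) by (intro mult_nonneg_nonneg) simp_all
  also have "\<dots> = c * (N * mu - S) - N * c\<^sup>2"
    unfolding c_def s_def[symmetric] using s(3) by (simp add: field_simps power2_eq_square)
  finally show ?thesis
    by simp
qed

lemma distr_snd_pair_measure:
  assumes "prob_space M1" and "sigma_finite_measure M2"
  shows "distr (M1 \<Otimes>\<^sub>M M2) M2 snd = M2"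
proof (rule measure_eqI)
  fix A assume "A \<in> sets (distr (M1 \<Otimes>\<^sub>M M2) M2 snd)"
  then have A: "A \<in> sets M2" by simp
  have "emeasure (distr (M1 \<Otimes>\<^sub>M M2) M2 snd) A = emeasure (M1 \<Otimes>\<^sub>M M2) (space M1 \<times> A)"
    using A sets.sets_into_space[OF A] by (subst emeasure_distr) (auto simp: space_pair_measure intro!: arg_cong2[where f=emeasure])
  also have "\<dots> = emeasure M1 (space M1) * emeasure M2 A"
    using A by (intro sigma_finite_measure.emeasure_pair_measure_Times assms(2)) simp_all
  finally show "emeasure (distr (M1 \<Otimes>\<^sub>M M2) M2 snd) A = emeasure M2 A"
    by (simp add: prob_space.emeasure_space_1[OF assms(1)])
qed simp

lemma distr_focus_space_first_stream:
  "distr (focus_space mu) (PiM I (\<lambda>_. density lborel (normal_density mu 1))) (\<lambda>\<omega>. \<lambda>i\<in>I. snd \<omega> (1, i))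
    = PiM I (\<lambda>_. density lborel (normal_density mu 1))"
proof -
  let ?U = "PiM UNIV (\<lambda>_::nat \<times> nat. uniform_measure lborel {0<..<1::real})"
  let ?N = "\<lambda>p::nat \<times> nat. density lborel (normal_density (if fst p = 1 then mu else 0) 1)"
  let ?X = "PiM UNIV ?N"
  let ?P = "PiM I (\<lambda>_. density lborel (normal_density mu 1))"
  have "prob_space ?U" "prob_space ?X"
    by (intro prob_space_PiM prob_space_uniform_measure prob_space_normal_density; simp)+
  then have snd: "distr (focus_space mu) ?X snd = ?X"
    unfolding focus_space_def by (intro distr_snd_pair_measure prob_space_imp_sigma_finite)
  have "(\<lambda>X. X (1, i)) \<in> measurable ?X (?N (1, i))" for i
    by (rule measurable_component_singleton) simp
  then have restrict: "(\<lambda>X. \<lambda>i\<in>I. X (1, i)) \<in> measurable ?X ?P"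
    by (intro measurable_restrict) simp
  have "distr (focus_space mu) ?P (\<lambda>\<omega>. \<lambda>i\<in>I. snd \<omega> (1, i)) = distr (distr (focus_space mu) ?X snd) ?P (\<lambda>X. \<lambda>i\<in>I. X (1, i))"
    using restrict by (subst distr_distr) (auto simp: comp_def focus_space_def)
  also have "\<dots> = distr ?X (PiM I (\<lambda>i. ?N (1, i))) (\<lambda>X. \<lambda>i\<in>I. X (1, i))"
    unfolding snd by simp
  also have "\<dots> = PiM I (\<lambda>i. ?N (1, i))"
    by (rule distr_PiM_reindex) (auto simp: prob_space_normal_density inj_on_def)
  finally show ?thesis
    by simp
qed

lemma measurable_first_stream:
  "(\<lambda>\<omega>. \<lambda>i\<in>I. snd \<omega> (1, i)) \<in> measurable (focus_space mu) (PiM I (\<lambda>_. density lborel (normal_density mu 1)))"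
proof (rule measurable_restrict)
  fix i
  show "(\<lambda>\<omega>. snd \<omega> (1, i)) \<in> measurable (focus_space mu) (density lborel (normal_density mu 1))"
    by (subst measurable_cong_sets[OF refl, where N'=borel]) (simp_all add: measurable_observation)
qed

lemma measure_first_stream_preimage:
  assumes "A \<in> sets (PiM I (\<lambda>_. density lborel (normal_density mu 1)))"
  shows "measure (focus_space mu) ((\<lambda>\<omega>. \<lambda>i\<in>I. snd \<omega> (1, i)) -` A \<inter> space (focus_space mu))
    = measure (PiM I (\<lambda>_. density lborel (normal_density mu 1))) A"
  by (subst measure_distr[OF measurable_first_stream assms, symmetric]) (simp only: distr_focus_space_first_stream)

lemma length_arms: "length (arms U X M t) = t"
  by (induction t) auto

lemma Ncount_arms_le: "Ncount (arms U X M t) m \<le> t"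
  using length_filter_le[of _ "arms U X M t"] by (simp add: Ncount_def length_arms)

lemma low_Tstat_imp_prod_crosses:
  fixes X :: "nat \<times> nat \<Rightarrow> real" and mu T :: real
  defines "c \<equiv> mu - mu / sqrt 2"
  assumes T: "Tstat X h m < mu\<^sup>2 * T / 8" and N: "T / 2 < real (Ncount h m)" and "Ncount h m \<le> t"
  shows "(\<lambda>i\<in>{1..<1+t}. X (m, i)) \<in> prod_crosses (\<lambda>_ y. exp (- c * (y - mu) - c\<^sup>2 / 2)) 1 (exp (T / 4 * c\<^sup>2)) 1 t"
proof -
  define N where "N = Ncount h m"
  define S where "S = (\<Sum>i\<in>{1..N}. X (m, i))"
  have "N \<noteq> 0"
  proof
    assume "N = 0"
    then have "0 < mu\<^sup>2 * T" using T by (simp add: Tstat_def N_def)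
    then show False using N \<open>N = 0\<close> by (simp add: N_def zero_less_mult_iff)
  qed
  then have "seg X m N 0 \<le> Tstat X h m"
    unfolding Tstat_def Let_def N_def[symmetric] by (auto intro!: Max_ge)
  then have "S\<^sup>2 / (2 * N) < mu\<^sup>2 * T / 8"
    using T by (simp add: seg_def S_def)
  also have "\<dots> \<le> mu\<^sup>2 * (2 * N) / 8"
    using N by (intro divide_right_mono mult_left_mono) (simp_all add: N_def)
  finally have "2 * S\<^sup>2 < mu\<^sup>2 * (real N)\<^sup>2"
    using \<open>N \<noteq> 0\<close> by (simp add: field_simps power2_eq_square)
  then have "N * c\<^sup>2 / 2 \<le> c * (N * mu - S) - N * c\<^sup>2 / 2"
    unfolding c_def by (rule mean_drift_bound) simp
  moreover have "T / 4 * c\<^sup>2 \<le> N * c\<^sup>2 / 2"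
    using mult_right_mono[of "T / 4" "N / 2" "c\<^sup>2"] N by (simp add: N_def)
  moreover have "(\<Sum>i\<in>{1..N}. - c * (X (m, i) - mu) - c\<^sup>2 / 2) = c * (N * mu - S) - N * c\<^sup>2 / 2"
    by (simp add: S_def sum.distrib sum_subtractf sum_distrib_left algebra_simps)
  ultimately have "T / 4 * c\<^sup>2 \<le> (\<Sum>i\<in>{1..N}. - c * (X (m, i) - mu) - c\<^sup>2 / 2)"
    by linarith
  then have "exp (T / 4 * c\<^sup>2) \<le> (\<Prod>i\<in>{1..N}. exp (- c * (X (m, i) - mu) - c\<^sup>2 / 2))"
    by (simp add: exp_sum[symmetric])
  also have "\<dots> = (\<Prod>i\<in>{1..<N+1}. exp (- c * ((\<lambda>i\<in>{1..<1+t}. X (m, i)) i - mu) - c\<^sup>2 / 2))"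
    using \<open>Ncount h m \<le> t\<close> unfolding N_def by (intro prod.cong) auto
  finally show ?thesis
    unfolding prod_crosses_def using \<open>Ncount h m \<le> t\<close> by (intro CollectI bexI[of _ "N + 1"]) (simp_all add: N_def)
qed

lemma measure_low_Tstat_first_stream:
  fixes mu T :: real
  shows "measure (focus_space mu) {\<omega> \<in> space (focus_space mu).
      Tstat (snd \<omega>) (arms (fst \<omega>) (snd \<omega>) M t) 1 < mu\<^sup>2 * T / 8 \<and>
      T / 2 < real (Ncount (arms (fst \<omega>) (snd \<omega>) M t) 1)}
    \<le> exp (- T / 4 * (mu - mu / sqrt 2)\<^sup>2)"
  (is "measure _ ?E \<le> _")
proof -
  define c where "c = mu - mu / sqrt 2"
  define f where "f = (\<lambda>(_::nat) y. exp (- c * (y - mu) - c\<^sup>2 / 2))"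
  define K where "K = exp (T / 4 * c\<^sup>2)"
  define P where "P = PiM {1..<1+t} (\<lambda>_. density lborel (normal_density mu 1))"
  define A where "A = prod_crosses f 1 K 1 t \<inter> space P"
  define g where "g = (\<lambda>\<omega> :: (nat \<times> nat \<Rightarrow> real) \<times> (nat \<times> nat \<Rightarrow> real). \<lambda>i\<in>{1..<1+t}. snd \<omega> (1, i))"
  interpret P: prob_space P
    unfolding P_def by (intro prob_space_PiM prob_space_normal_density) simp
  interpret F: prob_space "focus_space mu"
    by (rule prob_space_focus_space)
  have A: "A \<in> sets P"
    unfolding A_def P_def f_def by (intro prod_crosses_sets) simp
  have "?E \<subseteq> g -` A \<inter> space (focus_space mu)"
  proof
    fix \<omega> assume \<omega>: "\<omega> \<in> ?E"
    then have "g \<omega> \<in> prod_crosses f 1 K 1 t"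
      unfolding g_def f_def K_def c_def by (intro low_Tstat_imp_prod_crosses) (auto simp: Ncount_arms_le)
    then show "\<omega> \<in> g -` A \<inter> space (focus_space mu)"
      using \<omega> by (simp add: A_def P_def g_def space_PiM)
  qed
  then have "measure (focus_space mu) ?E \<le> measure (focus_space mu) (g -` A \<inter> space (focus_space mu))"
    unfolding g_def by (intro F.finite_measure_mono measurable_sets[OF measurable_first_stream A[unfolded P_def]])
  also have "\<dots> = measure P A"
    using A unfolding g_def P_def by (rule measure_first_stream_preimage)
  also have "\<dots> \<le> 1 / K"
  proof -
    have "emeasure P A \<le> ennreal (1 / K)"
      unfolding A_def P_def f_def K_def
      using nn_integral_normal_likelihood_ratio[where \<sigma>=1 and c=c and mu=mu]
      by (intro ville_inequality_PiM prob_space_normal_density) simp_all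
    then show ?thesis
      by (simp add: P.emeasure_eq_measure K_def)
  qed
  also have "1 / K = exp (- T / 4 * c\<^sup>2)"
    unfolding K_def by (simp add: exp_minus field_simps)
  finally show ?thesis
    unfolding c_def .
qed

theorem lemma1:
  fixes M t :: nat and mu :: real
  assumes "M > 1" and "mu \<noteq> 0"
  defines "E \<equiv> {\<omega> \<in> space (focus_space mu).
      Tstat (snd \<omega>) (arms (fst \<omega>) (snd \<omega>) M t) 1 < mu^2 * real t powr (2/3) / 8 \<and>
      real (Ncount (arms (fst \<omega>) (snd \<omega>) M t) 1) > real t powr (2/3) / 2}"
  shows "E \<in> sets (focus_space mu) \<and>
    (t \<ge> 1 \<longrightarrow> measure (focus_space mu) E
        \<le> exp (- (real t powr (2/3)) / 4 * (mu - mu / sqrt 2)^2)) \<and>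
    (t = 0 \<longrightarrow> measure (focus_space mu) E = 0)"
proof (intro conjI impI)
  show "E \<in> sets (focus_space mu)"
    unfolding E_def by measurable
  show "measure (focus_space mu) E \<le> exp (- (real t powr (2/3)) / 4 * (mu - mu / sqrt 2)^2)"
    unfolding E_def by (rule measure_low_Tstat_first_stream)
  assume "t = 0"
  then have "E = {}"
    unfolding E_def by (simp add: Ncount_def)
  then show "measure (focus_space mu) E = 0"
    by simp
qed

end
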